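(* Let Assumptions 1 (with $\delta\in(0,1]$) and 2 hold. For $A\ge1$ define $\alpha=2L\{1-\Phi(A\sqrt{2\log L})\}+2A_0(1+A\sqrt{2\log L})^{1+\delta}/(L^{A^2-1}d_{n,\delta}^{2+\delta})$, set $r=A\sqrt{2\log(L)/n}$, and assume $L\le\exp(d_{n,\delta}^2/(2A^2))$. Let $\widehat\beta$ be any solution of $$\min\Big\{|{\bf D_X}^{-1}\beta|_1:\ \beta\in\mathbb R^K,\ \Big|\frac1n{\bf D_Z}{\bf Z}^T({\bf Y}-{\bf X}\beta)\Big|_\infty\le\sigma_*r\Big\},$$ where $\sigma_*$ is the constant of Assumption 2. Then with probability at least $1-\alpha-\gamma_1$, $$\big|{\bf D_X}^{-1}(\widehat\beta-\beta^* )\big|_p\le\frac{2\sigma_*r}{\kappa_{p,J(\beta^* )}}\quad\forall p\in[1,\infty],\qquad |\widehat\beta_k-\beta^*_k|\le\frac{2\sigma_*r}{x_{k*}\kappa^*_{k,J(\beta^* )}}\quad\forall k=1,\dots,K,$$ where the sensitivities are those defined with the cone $C_J$ taken with $c=0$, i.e. $C_J=\{\Delta:|\Delta_{J^c}|_1\le|\Delta_J|_1\}$.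
   Context: Setting: integers $n,K,L$ with $L\ge K$, $k_{\rm end}\in\{0,\dots,K\}$; observations $(y_i,x_i,z_i)$, $i=1,\dots,n$, with $y_i=x_i^T\beta^*+u_i$, $x_i\in\mathbb R^K$, $z_i\in\mathbb R^L$, the $(y_i,x_i,z_i,u_i)$ mutually independent; the exogenous regressors are their own instruments: $z_{li}=x_{(k_{\rm end}+l)i}$ for $l\le K-k_{\rm end}$. ${\bf Y},{\bf X},{\bf Z}$ data matrices; $x_{k*}=\max_i|x_{ki}|$, $z_{l*}=\max_i|z_{li}|$ (positive); ${\bf D_X}={\rm diag}(x_{k*}^{-1})$, ${\bf D_Z}={\rm diag}(z_{l*}^{-1})$; $\Psi_n=\frac1n{\bf D_Z}{\bf Z}^T{\bf X}{\bf D_X}$; $\mathbb E_n[U^2]=\frac1n\sum u_i^2$. $J(\beta)$ support; $\Delta_J$ zeroes coordinates outside $J$. Sensitivities: $\kappa_{p,J}=\inf\{|\Psi_n\Delta|_\infty:\Delta\in C_J,|\Delta|_p=1\}$, $\kappa^*_{k,J}=\inf\{|\Psi_n\Delta|_\infty:\Delta\in C_J,\Delta_k=1\}$. Assumption 1: for all $i,l$, $\mathbb E|z_{li}u_i|^{2+\delta}<\infty$, $\mathbb E[z_{li}u_i]=0$, $z_{li}u_i$ not a.s. zero; $d_{n,\delta}=\min_l\sqrt{\sum_i\mathbb E z_{li}^2u_i^2}/(\sum_i\mathbb E|z_{li}u_i|^{2+\delta})^{1/(2+\delta)}$. Assumption 2: there are $\sigma_*>0$, $\gamma_1\in(0,1)$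 with $\mathbb P(\mathbb E_n[U^2]\le\sigma_*^2)\ge1-\gamma_1$. $\Phi$ is the standard normal cdf and $A_0$ the absolute constant of the Jing–Shao–Wang self-normalized moderate deviation bound: for independent mean-zero $X_i$ with $0<\mathbb E|X_i|^{2+\delta}<\infty$, $|\mathbb P(S_n/V_n\ge x)-(1-\Phi(x))|\le A_0(1+x)^{1+\delta}e^{-x^2/2}/d^{2+\delta}$ for $0\le x\le d$, with $S_n=\sum X_i$, $V_n^2=\sum X_i^2$, $d=(\sum\mathbb EX_i^2)^{1/2}/(\sum\mathbb E|X_i|^{2+\delta})^{1/(2+\delta)}$. *)

theory Defs
  imports "HOL-Probability.Probability"
begin

definition Phi :: "real \<Rightarrow> real" where
  "Phi x = measure (density lborel std_normal_density) {..x}"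

definition lpnorm :: "ereal \<Rightarrow> nat set \<Rightarrow> (nat \<Rightarrow> real) \<Rightarrow> real" where
  "lpnorm p I v = (if p = \<infinity> then Max (insert 0 ((\<lambda>i. \<bar>v i\<bar>) ` I))
     else (\<Sum>i\<in>I. \<bar>v i\<bar> powr real_of_ereal p) powr (1 / real_of_ereal p))"

text \<open>max_{i=1..n} |f i|  (used for x_{k*}, z_{l*}).\<close>
definition maxabs :: "nat \<Rightarrow> (nat \<Rightarrow> real) \<Rightarrow> real" where
  "maxabs n f = Max ((\<lambda>i. \<bar>f i\<bar>) ` {1..n})"

text \<open>Psi_n = (1/n) D_Z Z^T X D_X, entry (l,k); X k i = x_{ki}, Z l i = z_{li}.\<close>
definition Psi :: "nat \<Rightarrow> (nat \<Rightarrow> nat \<Rightarrow> real) \<Rightarrow> (nat \<Rightarrow> nat \<Rightarrow> real) \<Rightarrow> nat \<Rightarrow> nat \<Rightarrow> real" where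
  "Psi n X Z l k = (1 / real n) * (\<Sum>i=1..n. Z l i * X k i) / (maxabs n (Z l) * maxabs n (X k))"

definition supp :: "nat \<Rightarrow> (nat \<Rightarrow> real) \<Rightarrow> nat set" where
  "supp K b = {k \<in> {1..K}. b k \<noteq> 0}"

definition cone0 :: "nat \<Rightarrow> nat set \<Rightarrow> (nat \<Rightarrow> real) \<Rightarrow> bool" where
  "cone0 K J D \<longleftrightarrow> (\<Sum>k\<in>{1..K} - J. \<bar>D k\<bar>) \<le> (\<Sum>k\<in>J. \<bar>D k\<bar>)"

text \<open>Vectors of R^K (coordinates outside 1..K are zero).\<close>
definition vecK :: "nat \<Rightarrow> (nat \<Rightarrow> real) \<Rightarrow> bool" where
  "vecK K D \<longleftrightarrow> (\<forall>k. k \<notin> {1..K} \<longrightarrow> D k = 0)"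

definition PsiD :: "nat \<Rightarrow> nat \<Rightarrow> nat \<Rightarrow> (nat \<Rightarrow> nat \<Rightarrow> real) \<Rightarrow> (nat \<Rightarrow> nat \<Rightarrow> real) \<Rightarrow> (nat \<Rightarrow> real) \<Rightarrow> real" where
  "PsiD n K L X Z D = lpnorm \<infinity> {1..L} (\<lambda>l. \<Sum>k=1..K. Psi n X Z l k * D k)"

text \<open>Sensitivities (extended-real valued: inf of the empty set is +infinity).\<close>
definition kappa :: "nat \<Rightarrow> nat \<Rightarrow> nat \<Rightarrow> (nat \<Rightarrow> nat \<Rightarrow> real) \<Rightarrow> (nat \<Rightarrow> nat \<Rightarrow> real) \<Rightarrow> ereal \<Rightarrow> nat set \<Rightarrow> ereal" where
  "kappa n K L X Z p J = Inf {ereal (PsiD n K L X Z D) | D. vecK K D \<and> cone0 K J D \<and> lpnorm p {1..K} D = 1}"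

definition kappa_star :: "nat \<Rightarrow> nat \<Rightarrow> nat \<Rightarrow> (nat \<Rightarrow> nat \<Rightarrow> real) \<Rightarrow> (nat \<Rightarrow> nat \<Rightarrow> real) \<Rightarrow> nat \<Rightarrow> nat set \<Rightarrow> ereal" where
  "kappa_star n K L X Z k0 J = Inf {ereal (PsiD n K L X Z D) | D. vecK K D \<and> cone0 K J D \<and> D k0 = 1}"

definition feasible :: "nat \<Rightarrow> nat \<Rightarrow> nat \<Rightarrow> (nat \<Rightarrow> real) \<Rightarrow> (nat \<Rightarrow> nat \<Rightarrow> real) \<Rightarrow> (nat \<Rightarrow> nat \<Rightarrow> real) \<Rightarrow> real \<Rightarrow> (nat \<Rightarrow> real) \<Rightarrow> bool" where
  "feasible n K L Y X Z t b \<longleftrightarrow>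
     lpnorm \<infinity> {1..L} (\<lambda>l. (1 / real n) * (\<Sum>i=1..n. Z l i * (Y i - (\<Sum>k=1..K. X k i * b k))) / maxabs n (Z l)) \<le> t"

definition objective :: "nat \<Rightarrow> nat \<Rightarrow> (nat \<Rightarrow> nat \<Rightarrow> real) \<Rightarrow> (nat \<Rightarrow> real) \<Rightarrow> real" where
  "objective n K X b = (\<Sum>k=1..K. maxabs n (X k) * \<bar>b k\<bar>)"

definition is_solution :: "nat \<Rightarrow> nat \<Rightarrow> nat \<Rightarrow> (nat \<Rightarrow> real) \<Rightarrow> (nat \<Rightarrow> nat \<Rightarrow> real) \<Rightarrow> (nat \<Rightarrow> nat \<Rightarrow> real) \<Rightarrow> real \<Rightarrow> (nat \<Rightarrow> real) \<Rightarrow> bool" where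
  "is_solution n K L Y X Z t b \<longleftrightarrow> feasible n K L Y X Z t b \<and>
     (\<forall>b'. feasible n K L Y X Z t b' \<longrightarrow> objective n K X b \<le> objective n K X b')"

definition dnd :: "'a measure \<Rightarrow> nat \<Rightarrow> nat \<Rightarrow> (nat \<Rightarrow> nat \<Rightarrow> 'a \<Rightarrow> real) \<Rightarrow> (nat \<Rightarrow> 'a \<Rightarrow> real) \<Rightarrow> real \<Rightarrow> real" where
  "dnd M n L z u \<delta> = Min ((\<lambda>l. sqrt (\<Sum>i=1..n. integral\<^sup>L M (\<lambda>\<omega>. (z l i \<omega>)\<^sup>2 * (u i \<omega>)\<^sup>2))
        / (\<Sum>i=1..n. integral\<^sup>L M (\<lambda>\<omega>. \<bar>z l i \<omega> * u i \<omega>\<bar> powr (2 + \<delta>))) powr (1 / (2 + \<delta>))) ` {1..L})"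

text \<open>Observation i as a random element (y_i, x_i, z_i, u_i).\<close>
definition obs_space :: "nat \<Rightarrow> nat \<Rightarrow> (real \<times> (nat \<Rightarrow> real) \<times> (nat \<Rightarrow> real) \<times> real) measure" where
  "obs_space K L = borel \<Otimes>\<^sub>M (Pi\<^sub>M {1..K} (\<lambda>_. borel) \<Otimes>\<^sub>M (Pi\<^sub>M {1..L} (\<lambda>_. borel) \<Otimes>\<^sub>M borel))"

definition obs :: "nat \<Rightarrow> nat \<Rightarrow> (nat \<Rightarrow> 'a \<Rightarrow> real) \<Rightarrow> (nat \<Rightarrow> nat \<Rightarrow> 'a \<Rightarrow> real) \<Rightarrow> (nat \<Rightarrow> nat \<Rightarrow> 'a \<Rightarrow> real) \<Rightarrow> (nat \<Rightarrow> 'a \<Rightarrow> real) \<Rightarrow> nat \<Rightarrow> 'a \<Rightarrow> real \<times> (nat \<Rightarrow> real) \<times> (nat \<Rightarrow> real) \<times> real" where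
  "obs K L y x z u i \<omega> = (y i \<omega>, (\<lambda>k\<in>{1..K}. x k i \<omega>), (\<lambda>l\<in>{1..L}. z l i \<omega>), u i \<omega>)"

text \<open>A0 is a constant for which the Jing-Shao-Wang self-normalized moderate deviation
  bound holds (for the given delta), for every probability space (on the type 'a), every m >= 1
  and every independent family of mean-zero variables with 0 < E|X_i|^(2+delta) < infinity.\<close>
definition jsw_constant :: "'a itself \<Rightarrow> real \<Rightarrow> real \<Rightarrow> bool" where
  "jsw_constant (_ :: 'a itself) A0 \<delta> \<longleftrightarrow>
    (\<forall>(N :: 'a measure) (m :: nat) (X :: nat \<Rightarrow> 'a \<Rightarrow> real).
       prob_space N \<and> 1 \<le> m \<and> prob_space.indep_vars N (\<lambda>_. borel) X {1..m} \<and>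
       (\<forall>i\<in>{1..m}. integrable N (X i) \<and> integral\<^sup>L N (X i) = 0 \<and>
          integrable N (\<lambda>\<omega>. \<bar>X i \<omega>\<bar> powr (2 + \<delta>)) \<and>
          0 < integral\<^sup>L N (\<lambda>\<omega>. \<bar>X i \<omega>\<bar> powr (2 + \<delta>)))
       \<longrightarrow>
       (let d = sqrt (\<Sum>i=1..m. integral\<^sup>L N (\<lambda>\<omega>. (X i \<omega>)\<^sup>2))
                / (\<Sum>i=1..m. integral\<^sup>L N (\<lambda>\<omega>. \<bar>X i \<omega>\<bar> powr (2 + \<delta>))) powr (1 / (2 + \<delta>))
        in \<forall>t. 0 \<le> t \<and> t \<le> d \<longrightarrow>
             \<bar>measure N {\<omega> \<in> space N. (\<Sum>i=1..m. X i \<omega>) / sqrt (\<Sum>i=1..m. (X i \<omega>)\<^sup>2) \<ge> t}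
                - (1 - Phi t)\<bar>
             \<le> A0 * (1 + t) powr (1 + \<delta>) * exp (- t\<^sup>2 / 2) / d powr (2 + \<delta>)))"

end

theory Submission
  imports Defs
begin

(* The proof separates a deterministic and a probabilistic part.
   Deterministic part: if the true coefficient beta_star is feasible for the program
   min |D_X^{-1} b|_1 s.t. |(1/n) D_Z Z^T (Y - X b)|_inf <= t, then for every solution b
   the normalised error Delta = D_X^{-1}(b - beta_star) satisfies |Psi_n Delta|_inf <= 2t (both
   points are feasible) and lies in the cone C_{J(beta_star)} (b has smaller l1 norm); the
   definitions of the sensitivities kappa_{p,J} and kappa_star_{k,J} then give the bounds.
   Probabilistic part: the event on which E_n[U^2] <= sigma_star^2 and every self-normalised
   instrument score |sum_i z_li u_i| / sqrt(sum_i (z_li u_i)^2) is below A sqrt(2 log L)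
   has probability at least 1 - alpha - gamma1, by the Jing-Shao-Wang moderate deviation
   bound for each instrument and a union bound over the L instruments.  On this event
   beta_star is feasible with t = sigma_star r, and the theorem follows. *)

lemma lpnorm_nonneg: "1 \<le> p \<Longrightarrow> finite I \<Longrightarrow> 0 \<le> lpnorm p I v"
  unfolding lpnorm_def by (auto intro: Max_ge)

lemma lpnorm_cong: "(\<And>i. i \<in> I \<Longrightarrow> v i = w i) \<Longrightarrow> lpnorm p I v = lpnorm p I w"
  unfolding lpnorm_def by (simp cong: image_cong sum.cong)

lemma lpnorm_scale:
  assumes "finite I" "a \<noteq> 0" "1 \<le> p"
  shows "lpnorm p I (\<lambda>i. v i / a) = lpnorm p I v / \<bar>a\<bar>"
proof (cases "p = \<infinity>")
  case True
  have mono: "mono (\<lambda>x::real. x / \<bar>a\<bar>)"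
    by (auto simp: mono_def divide_right_mono)
  have "Max (insert 0 ((\<lambda>i. \<bar>v i / a\<bar>) ` I)) = Max ((\<lambda>x. x / \<bar>a\<bar>) ` insert 0 ((\<lambda>i. \<bar>v i\<bar>) ` I))"
    by (simp add: image_image abs_divide)
  also have "\<dots> = Max (insert 0 ((\<lambda>i. \<bar>v i\<bar>) ` I)) / \<bar>a\<bar>"
    using mono_Max_commute[OF mono] assms(1) by simp
  finally show ?thesis using True unfolding lpnorm_def by simp
next
  case False
  define q where "q = real_of_ereal p"
  have q: "1 \<le> q" using assms(3) False unfolding q_def by (cases p) auto
  have "(\<Sum>i\<in>I. \<bar>v i / a\<bar> powr q) powr (1/q)
      = ((\<Sum>i\<in>I. \<bar>v i\<bar> powr q) / \<bar>a\<bar> powr q) powr (1/q)"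
    by (simp add: abs_divide powr_divide sum_divide_distrib)
  also have "\<dots> = (\<Sum>i\<in>I. \<bar>v i\<bar> powr q) powr (1/q) / \<bar>a\<bar>"
    using q assms(2) by (simp add: powr_divide sum_nonneg powr_powr)
  finally show ?thesis using False unfolding lpnorm_def q_def by simp
qed

lemma lpnorm_inf_le: "finite I \<Longrightarrow> lpnorm \<infinity> I f \<le> t \<Longrightarrow> l \<in> I \<Longrightarrow> \<bar>f l\<bar> \<le> t"
  unfolding lpnorm_def by (auto simp: Max_le_iff)

lemma lpnorm_inf_leI: "finite I \<Longrightarrow> (\<And>l. l \<in> I \<Longrightarrow> \<bar>f l\<bar> \<le> t) \<Longrightarrow> 0 \<le> t \<Longrightarrow> lpnorm \<infinity> I f \<le> t"
  unfolding lpnorm_def by (auto simp: Max_le_iff)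

lemma PsiD_nonneg: "0 \<le> PsiD n K L X Z D"
  unfolding PsiD_def by (rule lpnorm_nonneg) auto

lemma PsiD_scale: "a \<noteq> 0 \<Longrightarrow> PsiD n K L X Z (\<lambda>k. D k / a) = PsiD n K L X Z D / \<bar>a\<bar>"
  using lpnorm_scale[of "{1..L}" a \<infinity> "\<lambda>l. \<Sum>k=1..K. Psi n X Z l k * D k"]
  unfolding PsiD_def by (simp add: sum_divide_distrib)

lemma cone0_scale: "cone0 K J D \<Longrightarrow> cone0 K J (\<lambda>k. D k / a)"
  unfolding cone0_def by (simp add: abs_divide sum_divide_distrib[symmetric] divide_right_mono)

lemma vecK_scale: "vecK K D \<Longrightarrow> vecK K (\<lambda>k. D k / a)"
  unfolding vecK_def by simp

lemma kappa_nonneg: "0 \<le> kappa n K L X Z p J"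
  unfolding kappa_def by (rule Inf_greatest) (auto intro: PsiD_nonneg)

lemma kappa_star_nonneg: "0 \<le> kappa_star n K L X Z k J"
  unfolding kappa_star_def by (rule Inf_greatest) (auto intro: PsiD_nonneg)

(* Bounding s by c / kappa in the extended reals: it suffices that kappa <= c / s
   whenever s > 0 (kappa = 0 or kappa = infinity being handled by ereal arithmetic). *)
lemma ereal_le_div:
  fixes \<kappa> :: ereal
  assumes "0 \<le> s" "0 < c" "0 \<le> \<kappa>" "0 < s \<Longrightarrow> \<kappa> \<le> ereal (c / s)"
  shows "ereal s \<le> ereal c / \<kappa>"
proof (cases \<kappa>)
  case (real r)
  show ?thesis
  proof (cases "r = 0 \<or> s = 0")
    case True
    then show ?thesis using real assms by auto
  next
    case False
    then have "r \<le> c / s" and "0 < r" "0 < s" using real assms by auto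
    then have "s \<le> c / r" by (simp add: field_simps)
    then show ?thesis using real \<open>0 < r\<close> by simp
  qed
next
  case PInf
  then have "s = 0" using assms by (cases "s = 0") auto
  then show ?thesis using PInf by simp
qed (use assms in simp)

lemma lp_error_le_sensitivity:
  assumes D: "vecK K D" "cone0 K J D" and PD: "PsiD n K L X Z D \<le> c"
    and c: "0 < c" and p: "1 \<le> p"
  shows "ereal (lpnorm p {1..K} D) \<le> ereal c / kappa n K L X Z p J"
proof (rule ereal_le_div[OF lpnorm_nonneg[OF p finite_atLeastAtMost] c kappa_nonneg])
  define s where "s = lpnorm p {1..K} D"
  assume "0 < lpnorm p {1..K} D"
  then have s: "0 < s" unfolding s_def .
  have "lpnorm p {1..K} (\<lambda>k. D k / s) = 1"
    using lpnorm_scale[of "{1..K}" s p D] s p unfolding s_def by simp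
  then have "kappa n K L X Z p J \<le> ereal (PsiD n K L X Z (\<lambda>k. D k / s))"
    unfolding kappa_def using vecK_scale[OF D(1)] cone0_scale[OF D(2)] by (intro Inf_lower) blast
  also have "\<dots> \<le> ereal (c / s)"
    using PsiD_scale[of s] s PD by (simp add: divide_right_mono)
  finally show "kappa n K L X Z p J \<le> ereal (c / lpnorm p {1..K} D)" unfolding s_def .
qed

(* The same for the coordinatewise sensitivity kappa_star_{k,J}; the coordinate is given in the
   scale D_k = a * s of the normalised design, so that the bound is stated for s. *)
lemma coord_error_le_sensitivity:
  assumes D: "vecK K D" "cone0 K J D" and PD: "PsiD n K L X Z D \<le> c"
    and c: "0 < c" and a: "0 < a" and Dk: "D k = a * s"
  shows "ereal \<bar>s\<bar> \<le> ereal c / (ereal a * kappa_star n K L X Z k J)"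
proof (rule ereal_le_div)
  show "0 \<le> ereal a * kappa_star n K L X Z k J" using a kappa_star_nonneg by simp
  assume "0 < \<bar>s\<bar>"
  then have Dk0: "D k \<noteq> 0" using Dk a by simp
  have "kappa_star n K L X Z k J \<le> ereal (PsiD n K L X Z (\<lambda>j. D j / D k))"
    unfolding kappa_star_def using vecK_scale[OF D(1)] cone0_scale[OF D(2)] Dk0
    by (intro Inf_lower) auto
  also have "\<dots> \<le> ereal (c / \<bar>D k\<bar>)"
    using PsiD_scale[OF Dk0] Dk0 PD by (simp add: divide_right_mono)
  finally have "ereal a * kappa_star n K L X Z k J \<le> ereal a * ereal (c / \<bar>D k\<bar>)"
    using a by (intro ereal_mult_left_mono) auto
  then show "ereal a * kappa_star n K L X Z k J \<le> ereal (c / \<bar>s\<bar>)"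
    using Dk a by (simp add: abs_mult)
qed (use c in auto)

definition iv_score :: "nat \<Rightarrow> nat \<Rightarrow> (nat \<Rightarrow> real) \<Rightarrow> (nat \<Rightarrow> nat \<Rightarrow> real) \<Rightarrow> (nat \<Rightarrow> nat \<Rightarrow> real)
    \<Rightarrow> (nat \<Rightarrow> real) \<Rightarrow> nat \<Rightarrow> real" where
  "iv_score n K Y X Z b l =
     (1 / real n) * (\<Sum>i=1..n. Z l i * (Y i - (\<Sum>k=1..K. X k i * b k))) / maxabs n (Z l)"

lemma feasible_iff_score: "feasible n K L Y X Z t b \<longleftrightarrow> lpnorm \<infinity> {1..L} (iv_score n K Y X Z b) \<le> t"
  unfolding feasible_def iv_score_def ..

definition scaled_diff :: "nat \<Rightarrow> nat \<Rightarrow> (nat \<Rightarrow> nat \<Rightarrow> real) \<Rightarrow> (nat \<Rightarrow> real) \<Rightarrow> (nat \<Rightarrow> real) \<Rightarrow> nat \<Rightarrow> real" where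
  "scaled_diff n K X b' b k = (if k \<in> {1..K} then maxabs n (X k) * (b' k - b k) else 0)"

lemma Psi_scaled_diff:
  assumes xpos: "\<forall>k\<in>{1..K}. 0 < maxabs n (X k)"
  shows "(\<Sum>k=1..K. Psi n X Z l k * scaled_diff n K X b' b k)
       = iv_score n K Y X Z b l - iv_score n K Y X Z b' l"
proof -
  have "(\<Sum>k=1..K. Psi n X Z l k * scaled_diff n K X b' b k)
      = (\<Sum>k=1..K. (\<Sum>i=1..n. Z l i * X k i) * (b' k - b k)) / (real n * maxabs n (Z l))"
    unfolding sum_divide_distrib
  proof (intro sum.cong refl)
    fix k assume "k \<in> {1..K}"
    moreover have "0 < maxabs n (X k)" using xpos calculation by blast
    ultimately show "Psi n X Z l k * scaled_diff n K X b' b k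
        = (\<Sum>i=1..n. Z l i * X k i) * (b' k - b k) / (real n * maxabs n (Z l))"
      by (simp add: Psi_def scaled_diff_def)
  qed
  also have "(\<Sum>k=1..K. (\<Sum>i=1..n. Z l i * X k i) * (b' k - b k))
      = (\<Sum>i=1..n. Z l i * (Y i - (\<Sum>k=1..K. X k i * b k)))
        - (\<Sum>i=1..n. Z l i * (Y i - (\<Sum>k=1..K. X k i * b' k)))"
    by (simp add: sum_distrib_right sum_distrib_left sum_subtractf[symmetric] algebra_simps,
        rule sum.swap)
  finally show ?thesis unfolding iv_score_def by (simp add: diff_divide_distrib)
qed

lemma feasible_pair_PsiD:
  assumes xpos: "\<forall>k\<in>{1..K}. 0 < maxabs n (X k)"
    and feas: "feasible n K L Y X Z t b" "feasible n K L Y X Z t b'" and t: "0 \<le> t"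
  shows "PsiD n K L X Z (scaled_diff n K X b' b) \<le> 2 * t"
  unfolding PsiD_def Psi_scaled_diff[OF xpos, where Y = Y]
proof (rule lpnorm_inf_leI)
  fix l assume "l \<in> {1..L}"
  then have "\<bar>iv_score n K Y X Z b l\<bar> \<le> t" "\<bar>iv_score n K Y X Z b' l\<bar> \<le> t"
    using feas lpnorm_inf_le[of "{1..L}"] unfolding feasible_iff_score by blast+
  then show "\<bar>iv_score n K Y X Z b l - iv_score n K Y X Z b' l\<bar> \<le> 2 * t" by linarith
qed (use t in auto)

lemma l1_descent_in_cone:
  assumes xpos: "\<forall>k\<in>{1..K}. 0 < maxabs n (X k)"
    and obj: "objective n K X b' \<le> objective n K X b"
  shows "cone0 K (supp K b) (scaled_diff n K X b' b)"
proof -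
  define J where "J = supp K b"
  have J: "J \<subseteq> {1..K}" unfolding J_def supp_def by auto
  have off: "b k = 0" if "k \<in> {1..K} - J" for k using that unfolding J_def supp_def by auto
  let ?w = "\<lambda>k. maxabs n (X k)"
  have split: "objective n K X c = (\<Sum>k\<in>J. ?w k * \<bar>c k\<bar>) + (\<Sum>k\<in>{1..K}-J. ?w k * \<bar>c k\<bar>)" for c
    unfolding objective_def using sum.subset_diff[OF J] by (simp add: add.commute)
  have "(\<Sum>k\<in>{1..K}-J. \<bar>scaled_diff n K X b' b k\<bar>) = (\<Sum>k\<in>{1..K}-J. ?w k * \<bar>b' k\<bar>)"
  proof (intro sum.cong refl)
    fix k assume k: "k \<in> {1..K} - J"
    then have "0 < ?w k" using xpos by blast
    then show "\<bar>scaled_diff n K X b' b k\<bar> = ?w k * \<bar>b' k\<bar>"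
      using k off[OF k] by (simp add: scaled_diff_def abs_mult)
  qed
  also have "\<dots> \<le> (\<Sum>k\<in>J. ?w k * (\<bar>b k\<bar> - \<bar>b' k\<bar>))"
    using obj split[of b] split[of b'] off by (simp add: sum_subtractf right_diff_distrib)
  also have "\<dots> \<le> (\<Sum>k\<in>J. \<bar>scaled_diff n K X b' b k\<bar>)"
  proof (rule sum_mono)
    fix k assume "k \<in> J"
    then have k: "k \<in> {1..K}" using J by auto
    then have "0 < ?w k" using xpos by blast
    then have "?w k * (\<bar>b k\<bar> - \<bar>b' k\<bar>) \<le> ?w k * \<bar>b' k - b k\<bar>"
      by (intro mult_left_mono) auto
    then show "?w k * (\<bar>b k\<bar> - \<bar>b' k\<bar>) \<le> \<bar>scaled_diff n K X b' b k\<bar>"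
      using k \<open>0 < ?w k\<close> by (simp add: scaled_diff_def abs_mult)
  qed
  finally show ?thesis unfolding cone0_def J_def .
qed

theorem dantzig_error_bound:
  assumes xpos: "\<forall>k\<in>{1..K}. 0 < maxabs n (X k)"
    and feas: "feasible n K L Y X Z t b"
    and sol: "is_solution n K L Y X Z t b'"
    and t: "0 < t"
  shows "\<forall>p::ereal. 1 \<le> p \<longrightarrow>
           ereal (lpnorm p {1..K} (\<lambda>k. maxabs n (X k) * (b' k - b k)))
             \<le> ereal (2 * t) / kappa n K L X Z p (supp K b)"
    and "\<forall>k\<in>{1..K}. ereal \<bar>b' k - b k\<bar>
             \<le> ereal (2 * t) / (ereal (maxabs n (X k)) * kappa_star n K L X Z k (supp K b))"
proof -
  let ?D = "scaled_diff n K X b' b"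
  have feas': "feasible n K L Y X Z t b'" and obj: "objective n K X b' \<le> objective n K X b"
    using sol feas unfolding is_solution_def by auto
  have D: "vecK K ?D" "cone0 K (supp K b) ?D"
    using l1_descent_in_cone[OF xpos obj] by (auto simp: vecK_def scaled_diff_def)
  have PD: "PsiD n K L X Z ?D \<le> 2 * t"
    using feasible_pair_PsiD[OF xpos feas feas'] t by simp
  show "\<forall>p::ereal. 1 \<le> p \<longrightarrow> ereal (lpnorm p {1..K} (\<lambda>k. maxabs n (X k) * (b' k - b k)))
             \<le> ereal (2 * t) / kappa n K L X Z p (supp K b)"
    using lp_error_le_sensitivity[OF D PD] t lpnorm_cong[of "{1..K}" ?D] by (simp add: scaled_diff_def)
  show "\<forall>k\<in>{1..K}. ereal \<bar>b' k - b k\<bar>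
             \<le> ereal (2 * t) / (ereal (maxabs n (X k)) * kappa_star n K L X Z k (supp K b))"
    using coord_error_le_sensitivity[OF D PD] t xpos by (simp add: scaled_diff_def)
qed

lemma self_normalized_lt:
  fixes a :: "nat \<Rightarrow> real"
  assumes I: "finite I" and lt: "\<bar>\<Sum>i\<in>I. a i\<bar> / sqrt (\<Sum>i\<in>I. (a i)\<^sup>2) < t"
  shows "0 < t" and "\<bar>\<Sum>i\<in>I. a i\<bar> \<le> t * sqrt (\<Sum>i\<in>I. (a i)\<^sup>2)"
proof -
  define V where "V = sqrt (\<Sum>i\<in>I. (a i)\<^sup>2)"
  have "0 \<le> V" unfolding V_def by (simp add: sum_nonneg)
  then show "0 < t" using lt unfolding V_def[symmetric] by (smt (verit) divide_nonneg_nonneg)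
  show "\<bar>\<Sum>i\<in>I. a i\<bar> \<le> t * V"
  proof (cases "V = 0")
    case True
    then have "\<forall>i\<in>I. (a i)\<^sup>2 = 0" unfolding V_def using I by (simp add: sum_nonneg_eq_0_iff)
    then show ?thesis using True by simp
  next
    case False
    with \<open>0 \<le> V\<close> lt show ?thesis unfolding V_def[symmetric] by (simp add: divide_less_eq)
  qed
qed

lemma sqrt_sum_sq_weighted_le:
  fixes w U :: "nat \<Rightarrow> real"
  assumes "\<And>i. i \<in> I \<Longrightarrow> \<bar>w i\<bar> \<le> m"
  shows "sqrt (\<Sum>i\<in>I. (w i * U i)\<^sup>2) \<le> m * sqrt (\<Sum>i\<in>I. (U i)\<^sup>2)"
proof -
  have m: "0 \<le> m" if "I \<noteq> {}" using assms that by (meson abs_ge_zero all_not_in_conv order_trans)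
  have "(\<Sum>i\<in>I. (w i * U i)\<^sup>2) \<le> (\<Sum>i\<in>I. m\<^sup>2 * (U i)\<^sup>2)"
  proof (rule sum_mono)
    fix i assume "i \<in> I"
    then have "(w i)\<^sup>2 \<le> m\<^sup>2" using assms by (metis abs_le_square_iff abs_of_nonneg abs_ge_zero order_trans)
    then show "(w i * U i)\<^sup>2 \<le> m\<^sup>2 * (U i)\<^sup>2" by (simp add: power_mult_distrib mult_right_mono)
  qed
  then have "sqrt (\<Sum>i\<in>I. (w i * U i)\<^sup>2) \<le> sqrt (m\<^sup>2 * (\<Sum>i\<in>I. (U i)\<^sup>2))"
    by (simp add: sum_distrib_left)
  then show ?thesis using m by (cases "I = {}") (auto simp: real_sqrt_mult)
qed

lemma maxabs_ge: "i \<in> {1..n} \<Longrightarrow> \<bar>f i\<bar> \<le> maxabs n f"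
  unfolding maxabs_def by (intro Max_ge) auto

lemma true_coefficient_feasible:
  fixes X Z :: "nat \<Rightarrow> nat \<Rightarrow> real" and Y U b :: "nat \<Rightarrow> real"
  assumes n: "1 \<le> n" and zpos: "\<forall>l\<in>{1..L}. 0 < maxabs n (Z l)"
    and resid: "\<forall>i\<in>{1..n}. Y i - (\<Sum>k=1..K. X k i * b k) = U i"
    and score: "\<forall>l\<in>{1..L}. \<bar>\<Sum>i=1..n. Z l i * U i\<bar> \<le> t * sqrt (\<Sum>i=1..n. (Z l i * U i)\<^sup>2)"
    and t: "0 \<le> t" and U: "(1 / real n) * (\<Sum>i=1..n. (U i)\<^sup>2) \<le> \<sigma>\<^sup>2" and \<sigma>: "0 < \<sigma>"
  shows "feasible n K L Y X Z (\<sigma> * (t / sqrt (real n))) b"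
  unfolding feasible_iff_score
proof (rule lpnorm_inf_leI)
  fix l assume l: "l \<in> {1..L}"
  define m where "m = maxabs n (Z l)"
  have m: "0 < m" using zpos l unfolding m_def by blast
  have np: "0 < real n" using n by simp
  have "\<bar>iv_score n K Y X Z b l\<bar> = \<bar>\<Sum>i=1..n. Z l i * U i\<bar> / (real n * m)"
    using resid m unfolding iv_score_def m_def[symmetric] by (simp add: abs_divide abs_mult)
  also have "\<dots> \<le> t * sqrt (\<Sum>i=1..n. (Z l i * U i)\<^sup>2) / (real n * m)"
    using score l m np by (intro divide_right_mono) auto
  also have "\<dots> \<le> t * (m * sqrt (\<Sum>i=1..n. (U i)\<^sup>2)) / (real n * m)"
    using sqrt_sum_sq_weighted_le[of "{1..n}" "Z l" m U] maxabs_ge[of _ n "Z l"] t m np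
    unfolding m_def by (intro divide_right_mono mult_left_mono) auto
  also have "\<dots> \<le> t * (m * (sqrt (real n) * \<sigma>)) / (real n * m)"
  proof -
    have "sqrt (\<Sum>i=1..n. (U i)\<^sup>2) \<le> sqrt (real n * \<sigma>\<^sup>2)"
      using U np by (intro real_sqrt_le_mono) (simp add: field_simps)
    then show ?thesis using \<sigma> t m np by (intro divide_right_mono mult_left_mono) (auto simp: real_sqrt_mult)
  qed
  also have "\<dots> = \<sigma> * (t / sqrt (real n))"
    using m np by (simp add: field_simps)
  finally show "\<bar>iv_score n K Y X Z b l\<bar> \<le> \<sigma> * (t / sqrt (real n))" .
qed (use t \<sigma> in auto)

definition self_normalized :: "nat \<Rightarrow> (nat \<Rightarrow> 'a \<Rightarrow> real) \<Rightarrow> 'a \<Rightarrow> real" where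
  "self_normalized m X \<omega> = (\<Sum>i=1..m. X i \<omega>) / sqrt (\<Sum>i=1..m. (X i \<omega>)\<^sup>2)"

definition moment_ratio :: "'a measure \<Rightarrow> nat \<Rightarrow> (nat \<Rightarrow> 'a \<Rightarrow> real) \<Rightarrow> real \<Rightarrow> real" where
  "moment_ratio N m X \<delta> = sqrt (\<Sum>i=1..m. \<integral>\<omega>. (X i \<omega>)\<^sup>2 \<partial>N)
     / (\<Sum>i=1..m. \<integral>\<omega>. \<bar>X i \<omega>\<bar> powr (2 + \<delta>) \<partial>N) powr (1 / (2 + \<delta>))"

lemma self_normalized_uminus: "self_normalized m (\<lambda>i \<omega>. - X i \<omega>) \<omega> = - self_normalized m X \<omega>"
  unfolding self_normalized_def by (simp add: sum_negf)

lemma moment_ratio_uminus: "moment_ratio N m (\<lambda>i \<omega>. - X i \<omega>) \<delta> = moment_ratio N m X \<delta>"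
  unfolding moment_ratio_def by simp

lemma self_normalized_measurable:
  assumes "\<And>i. i \<in> {1..m} \<Longrightarrow> X i \<in> borel_measurable N"
  shows "self_normalized m X \<in> borel_measurable N"
proof -
  have [measurable]: "(\<lambda>\<omega>. \<Sum>i=1..m. X i \<omega>) \<in> borel_measurable N"
      "(\<lambda>\<omega>. \<Sum>i=1..m. (X i \<omega>)\<^sup>2) \<in> borel_measurable N"
    using assms by (intro borel_measurable_sum borel_measurable_power; simp)+
  show ?thesis unfolding self_normalized_def by measurable
qed

lemma jsw_upper_tail:
  fixes N :: "'a measure" and X :: "nat \<Rightarrow> 'a \<Rightarrow> real"
  assumes jsw: "jsw_constant TYPE('a) A0 \<delta>" and N: "prob_space N" and m: "1 \<le> m"
    and ind: "prob_space.indep_vars N (\<lambda>_. borel) X {1..m}"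
    and mom: "\<forall>i\<in>{1..m}. integrable N (X i) \<and> integral\<^sup>L N (X i) = 0 \<and>
          integrable N (\<lambda>\<omega>. \<bar>X i \<omega>\<bar> powr (2 + \<delta>)) \<and> 0 < integral\<^sup>L N (\<lambda>\<omega>. \<bar>X i \<omega>\<bar> powr (2 + \<delta>))"
    and t: "0 \<le> t" "t \<le> d" and d: "0 < d" "d \<le> moment_ratio N m X \<delta>" and \<delta>: "0 < \<delta>"
  shows "measure N {\<omega> \<in> space N. t \<le> self_normalized m X \<omega>}
      \<le> (1 - Phi t) + A0 * (1 + t) powr (1 + \<delta>) * exp (- t\<^sup>2 / 2) / d powr (2 + \<delta>)"
proof -
  define Q where "Q = A0 * (1 + t) powr (1 + \<delta>) * exp (- t\<^sup>2 / 2)"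
  define r where "r = moment_ratio N m X \<delta>"
  have "t \<le> r" using t d unfolding r_def by linarith
  with jsw N m ind mom t
  have tail: "\<bar>measure N {\<omega> \<in> space N. t \<le> self_normalized m X \<omega>} - (1 - Phi t)\<bar> \<le> Q / r powr (2 + \<delta>)"
    unfolding jsw_constant_def Let_def self_normalized_def Q_def r_def moment_ratio_def by blast
  have r: "0 < r powr (2 + \<delta>)" using d unfolding r_def by simp
  then have "0 \<le> Q" using tail by (smt (verit) zero_le_divide_iff)
  moreover have "d powr (2 + \<delta>) \<le> r powr (2 + \<delta>)"
    using d \<delta> unfolding r_def by (intro powr_mono2) auto
  ultimately have "Q / r powr (2 + \<delta>) \<le> Q / d powr (2 + \<delta>)"
    using d r by (intro divide_left_mono) auto
  with tail show ?thesis unfolding Q_def by linarith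
qed

(* Two-sided version, obtained by applying the one-sided bound to X and to -X. *)
lemma jsw_two_sided_tail:
  fixes N :: "'a measure" and X :: "nat \<Rightarrow> 'a \<Rightarrow> real"
  assumes jsw: "jsw_constant TYPE('a) A0 \<delta>" and N: "prob_space N" and m: "1 \<le> m"
    and ind: "prob_space.indep_vars N (\<lambda>_. borel) X {1..m}"
    and mom: "\<forall>i\<in>{1..m}. integrable N (X i) \<and> integral\<^sup>L N (X i) = 0 \<and>
          integrable N (\<lambda>\<omega>. \<bar>X i \<omega>\<bar> powr (2 + \<delta>)) \<and> 0 < integral\<^sup>L N (\<lambda>\<omega>. \<bar>X i \<omega>\<bar> powr (2 + \<delta>))"
    and t: "0 \<le> t" "t \<le> d" and d: "0 < d" "d \<le> moment_ratio N m X \<delta>" and \<delta>: "0 < \<delta>"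
  shows "measure N {\<omega> \<in> space N. t \<le> \<bar>self_normalized m X \<omega>\<bar>}
      \<le> 2 * ((1 - Phi t) + A0 * (1 + t) powr (1 + \<delta>) * exp (- t\<^sup>2 / 2) / d powr (2 + \<delta>))"
proof -
  interpret prob_space N by (rule N)
  let ?X' = "\<lambda>i \<omega>. - X i \<omega>"
  let ?up = "\<lambda>Y. {\<omega> \<in> space N. t \<le> self_normalized m Y \<omega>}"
  have X_meas: "X i \<in> borel_measurable N" if "i \<in> {1..m}" for i
    using ind that unfolding indep_vars_def2 by auto
  have meas: "?up Y \<in> sets N" if "\<And>i. i \<in> {1..m} \<Longrightarrow> Y i \<in> borel_measurable N" for Y
  proof -
    have [measurable]: "self_normalized m Y \<in> borel_measurable N"
      using self_normalized_measurable that .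
    show ?thesis by measurable
  qed
  have ind': "indep_vars (\<lambda>_. borel) ?X' {1..m}"
    using indep_vars_compose2[OF ind, of "\<lambda>_ x. - x"] by simp
  have "{\<omega> \<in> space N. t \<le> \<bar>self_normalized m X \<omega>\<bar>} = ?up X \<union> ?up ?X'"
    by (auto simp: self_normalized_uminus abs_le_iff)
  also have "measure N \<dots> \<le> measure N (?up X) + measure N (?up ?X')"
    by (intro measure_Un_le meas) (use X_meas in auto)
  also have "\<dots> \<le> 2 * ((1 - Phi t) + A0 * (1 + t) powr (1 + \<delta>) * exp (- t\<^sup>2 / 2) / d powr (2 + \<delta>))"
    using jsw_upper_tail[OF jsw N m ind mom t d \<delta>]
      jsw_upper_tail[OF jsw N m ind' _ t d(1) _ \<delta>] mom d(2)
    by (simp add: moment_ratio_uminus)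
  finally show ?thesis .
qed

(* x^2 <= |x| + |x|^(2+delta): a (2+delta)-th moment together with a first moment controls
   the second moment. *)
lemma sq_le_abs_plus_powr:
  fixes a \<delta> :: real
  assumes "0 < \<delta>"
  shows "a\<^sup>2 \<le> \<bar>a\<bar> + \<bar>a\<bar> powr (2 + \<delta>)"
proof (cases "\<bar>a\<bar> \<le> 1")
  case True
  have "a\<^sup>2 = \<bar>a\<bar> * \<bar>a\<bar>" by (simp add: power2_eq_square)
  also have "\<dots> \<le> \<bar>a\<bar>" using True by (intro mult_left_le) auto
  finally show ?thesis using powr_ge_zero[of "\<bar>a\<bar>" "2 + \<delta>"] by linarith
next
  case False
  then have "a\<^sup>2 = \<bar>a\<bar> powr 2" by (simp add: powr_numeral)
  also have "\<dots> \<le> \<bar>a\<bar> powr (2 + \<delta>)" using False assms by (intro powr_mono) auto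
  finally show ?thesis by simp
qed

lemma integral_pos_of_nonneg:
  fixes f :: "'a \<Rightarrow> real"
  assumes "integrable N f" "\<And>\<omega>. 0 \<le> f \<omega>" "\<not> (AE \<omega> in N. f \<omega> = 0)"
  shows "0 < integral\<^sup>L N f"
proof -
  have "0 \<le> integral\<^sup>L N f" using assms(2) by simp
  moreover have "integral\<^sup>L N f \<noteq> 0" using integral_nonneg_eq_0_iff_AE[OF assms(1)] assms(2,3) by simp
  ultimately show ?thesis by linarith
qed

lemma moment_ratio_pos:
  fixes N :: "'a measure" and X :: "nat \<Rightarrow> 'a \<Rightarrow> real"
  assumes m: "1 \<le> m" and \<delta>: "0 < \<delta>"
    and X: "\<forall>i\<in>{1..m}. X i \<in> borel_measurable N \<and> integrable N (X i) \<and>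
              integrable N (\<lambda>\<omega>. \<bar>X i \<omega>\<bar> powr (2 + \<delta>)) \<and> \<not> (AE \<omega> in N. X i \<omega> = 0)"
  shows "\<forall>i\<in>{1..m}. 0 < integral\<^sup>L N (\<lambda>\<omega>. \<bar>X i \<omega>\<bar> powr (2 + \<delta>))"
    and "0 < moment_ratio N m X \<delta>"
proof -
  have pos_abs: "0 < integral\<^sup>L N (\<lambda>\<omega>. \<bar>X i \<omega>\<bar> powr (2 + \<delta>))" if "i \<in> {1..m}" for i
    using X that by (intro integral_pos_of_nonneg) simp_all
  then show "\<forall>i\<in>{1..m}. 0 < integral\<^sup>L N (\<lambda>\<omega>. \<bar>X i \<omega>\<bar> powr (2 + \<delta>))" by blast
  have pos_sq: "0 < integral\<^sup>L N (\<lambda>\<omega>. (X i \<omega>)\<^sup>2)" if i: "i \<in> {1..m}" for i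
  proof (rule integral_pos_of_nonneg)
    have [measurable]: "X i \<in> borel_measurable N" using X i by blast
    show "integrable N (\<lambda>\<omega>. (X i \<omega>)\<^sup>2)"
    proof (rule Bochner_Integration.integrable_bound)
      show "integrable N (\<lambda>\<omega>. \<bar>X i \<omega>\<bar> + \<bar>X i \<omega>\<bar> powr (2 + \<delta>))"
        using X i by (intro Bochner_Integration.integrable_add integrable_abs) auto
      show "AE \<omega> in N. norm ((X i \<omega>)\<^sup>2) \<le> norm (\<bar>X i \<omega>\<bar> + \<bar>X i \<omega>\<bar> powr (2 + \<delta>))"
        using sq_le_abs_plus_powr[OF \<delta>] by auto
    qed measurable
  qed (use X i in simp_all)
  have "0 < (\<Sum>i=1..m. integral\<^sup>L N (\<lambda>\<omega>. (X i \<omega>)\<^sup>2))"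
    and "0 < (\<Sum>i=1..m. integral\<^sup>L N (\<lambda>\<omega>. \<bar>X i \<omega>\<bar> powr (2 + \<delta>)))"
    using pos_sq pos_abs m by (intro sum_pos; auto)+
  then show "0 < moment_ratio N m X \<delta>" unfolding moment_ratio_def by simp
qed

lemma dnd_as_Min: "dnd M n L z u \<delta> = Min ((\<lambda>l. moment_ratio M n (\<lambda>i \<omega>. z l i \<omega> * u i \<omega>) \<delta>) ` {1..L})"
  unfolding dnd_def moment_ratio_def by (simp add: power_mult_distrib)

lemma obs_space_components:
  shows "l \<in> {1..L} \<Longrightarrow> (\<lambda>p. fst (snd (snd p)) l) \<in> borel_measurable (obs_space K L)"
    and "(\<lambda>p. snd (snd (snd p))) \<in> borel_measurable (obs_space K L)"
proof -
  have tail: "(\<lambda>p. snd (snd p)) \<in> measurable (obs_space K L) (Pi\<^sub>M {1..L} (\<lambda>_. borel) \<Otimes>\<^sub>M borel)"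
    unfolding obs_space_def by (rule measurable_compose[OF measurable_snd measurable_snd])
  show "(\<lambda>p. snd (snd (snd p))) \<in> borel_measurable (obs_space K L)"
    by (rule measurable_compose[OF tail measurable_snd])
  assume "l \<in> {1..L}"
  from measurable_compose[OF measurable_compose[OF tail measurable_fst] measurable_component_singleton[OF this]]
  show "(\<lambda>p. fst (snd (snd p)) l) \<in> borel_measurable (obs_space K L)" by simp
qed

lemma obs_scores_indep:
  assumes M: "prob_space M" and indep: "prob_space.indep_vars M (\<lambda>_. obs_space K L) (obs K L y x z u) {1..n}"
    and l: "l \<in> {1..L}"
  shows "prob_space.indep_vars M (\<lambda>_. borel) (\<lambda>i \<omega>. z l i \<omega> * u i \<omega>) {1..n}"
proof -
  have "(\<lambda>p. fst (snd (snd p)) l * snd (snd (snd p))) \<in> borel_measurable (obs_space K L)"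
    using obs_space_components(1)[OF l] obs_space_components(2) by (rule borel_measurable_times)
  from prob_space.indep_vars_compose2[OF M indep, of "\<lambda>_ p. fst (snd (snd p)) l * snd (snd (snd p))", OF this]
  show ?thesis using l by (simp add: obs_def)
qed

lemma obs_u_measurable:
  assumes M: "prob_space M" and indep: "prob_space.indep_vars M (\<lambda>_. obs_space K L) (obs K L y x z u) {1..n}"
    and i: "i \<in> {1..n}"
  shows "u i \<in> borel_measurable M"
proof -
  have "obs K L y x z u i \<in> measurable M (obs_space K L)"
    using indep i unfolding prob_space.indep_vars_def2[OF M] by blast
  from measurable_comp[OF this obs_space_components(2)]
  show ?thesis by (simp add: comp_def obs_def)
qed

lemma threshold_le_moment_ratio:
  fixes A d :: real and L :: nat
  assumes A: "1 \<le> A" and d: "0 < d" and L: "1 \<le> L" and L_le: "real L \<le> exp (d\<^sup>2 / (2 * A\<^sup>2))"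
  shows "A * sqrt (2 * ln (real L)) \<le> d"
proof -
  have "ln (real L) \<le> ln (exp (d\<^sup>2 / (2 * A\<^sup>2)))"
    using L_le L by (subst ln_le_cancel_iff) auto
  then have "ln (real L) \<le> d\<^sup>2 / (2 * A\<^sup>2)" by simp
  then have "2 * A\<^sup>2 * ln (real L) \<le> d\<^sup>2" using A by (simp add: field_simps)
  moreover have "(A * sqrt (2 * ln (real L)))\<^sup>2 = 2 * A\<^sup>2 * ln (real L)"
    using L by (simp add: power_mult_distrib)
  ultimately have "(A * sqrt (2 * ln (real L)))\<^sup>2 \<le> d\<^sup>2" by simp
  from power2_le_imp_le[OF this] d show ?thesis by simp
qed

(* The probability alpha of the theorem is L times the two-sided JSW tail at this threshold,
   since L e^{-t^2/2} = L^{1-A^2}. *)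
lemma alpha_as_union_bound:
  fixes L :: nat and A A0 d \<delta> :: real
  assumes L: "1 \<le> L" and d: "0 < d"
  defines "t \<equiv> A * sqrt (2 * ln (real L))"
  shows "2 * real L * (1 - Phi t) + 2 * A0 * (1 + t) powr (1 + \<delta>) / (real L powr (A\<^sup>2 - 1) * d powr (2 + \<delta>))
     = real L * (2 * ((1 - Phi t) + A0 * (1 + t) powr (1 + \<delta>) * exp (- t\<^sup>2 / 2) / d powr (2 + \<delta>)))"
proof -
  have Lpos: "0 < real L" using L by simp
  have "t\<^sup>2 / 2 = A\<^sup>2 * ln (real L)" using L unfolding t_def by (simp add: power_mult_distrib)
  then have "real L * exp (- t\<^sup>2 / 2) = exp (ln (real L)) * exp (- (A\<^sup>2 * ln (real L)))"
    using Lpos by simp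
  also have "\<dots> = exp ((1 - A\<^sup>2) * ln (real L))"
    by (simp add: exp_add[symmetric] algebra_simps)
  also have "\<dots> = real L powr (1 - A\<^sup>2)"
    using Lpos by (simp add: powr_def mult.commute)
  also have "\<dots> = 1 / real L powr (A\<^sup>2 - 1)"
    by (simp add: powr_minus_divide[symmetric])
  finally have "real L * exp (- t\<^sup>2 / 2) = 1 / real L powr (A\<^sup>2 - 1)" .
  moreover have "2 * real L * a + 2 * b * c / (P * D) = real L * (2 * (a + b * c * e / D))"
    if "real L * e = 1 / P" "0 < P" "0 < D" for a b c e P D :: real
    using that by (simp add: field_simps)
  ultimately show ?thesis using Lpos d by simp
qed

lemma measure_Diff_UNION_ge:
  assumes M: "prob_space M" and I: "finite I" and G: "G \<in> sets M" and B: "\<And>i. i \<in> I \<Longrightarrow> B i \<in> sets M"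
    and PG: "1 - \<gamma> \<le> measure M G" and PB: "\<And>i. i \<in> I \<Longrightarrow> measure M (B i) \<le> \<beta>"
  shows "1 - real (card I) * \<beta> - \<gamma> \<le> measure M (G - (\<Union>i\<in>I. B i))"
proof -
  interpret prob_space M by (rule M)
  have "measure M (\<Union>i\<in>I. B i) \<le> (\<Sum>i\<in>I. measure M (B i))"
    using B by (intro measure_UNION_le I) auto
  also have "\<dots> \<le> real (card I) * \<beta>" using sum_bounded_above[of I "\<lambda>i. measure M (B i)" \<beta>] PB by simp
  finally have "measure M (\<Union>i\<in>I. B i) \<le> real (card I) * \<beta>" .
  moreover have "measure M G - measure M (\<Union>i\<in>I. B i) \<le> measure M (G - (\<Union>i\<in>I. B i))"
  proof -
    have U: "(\<Union>i\<in>I. B i) \<in> sets M" using B I by auto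
    then have "measure M (G \<inter> (\<Union>i\<in>I. B i)) \<le> measure M (\<Union>i\<in>I. B i)"
      by (intro finite_measure_mono) auto
    then show ?thesis using finite_measure_Diff'[OF G U] by linarith
  qed
  ultimately show ?thesis using PG by linarith
qed

lemma good_event:
  fixes M :: "'a measure" and n L :: nat and u :: "nat \<Rightarrow> 'a \<Rightarrow> real"
    and z :: "nat \<Rightarrow> nat \<Rightarrow> 'a \<Rightarrow> real" and \<delta> \<sigma> \<gamma> A A0 :: real
  assumes prob: "prob_space M" and n: "1 \<le> n" and L: "1 \<le> L"
    and indep: "prob_space.indep_vars M (\<lambda>_. obs_space K L) (obs K L y x z u) {1..n}"
    and jsw: "jsw_constant TYPE('a) A0 \<delta>" and \<delta>: "0 < \<delta>"
    and A1: "\<forall>i\<in>{1..n}. \<forall>l\<in>{1..L}.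
               integrable M (\<lambda>\<omega>. \<bar>z l i \<omega> * u i \<omega>\<bar> powr (2 + \<delta>)) \<and>
               integrable M (\<lambda>\<omega>. z l i \<omega> * u i \<omega>) \<and>
               integral\<^sup>L M (\<lambda>\<omega>. z l i \<omega> * u i \<omega>) = 0 \<and>
               \<not> (AE \<omega> in M. z l i \<omega> * u i \<omega> = 0)"
    and A2: "measure M {\<omega> \<in> space M. (1 / real n) * (\<Sum>i=1..n. (u i \<omega>)\<^sup>2) \<le> \<sigma>\<^sup>2} \<ge> 1 - \<gamma>"
    and A: "1 \<le> A" and L_le: "real L \<le> exp ((dnd M n L z u \<delta>)\<^sup>2 / (2 * A\<^sup>2))"
  shows "\<exists>E\<in>sets M.
     measure M E \<ge> 1
        - (2 * real L * (1 - Phi (A * sqrt (2 * ln (real L))))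
           + 2 * A0 * (1 + A * sqrt (2 * ln (real L))) powr (1 + \<delta>)
             / (real L powr (A\<^sup>2 - 1) * dnd M n L z u \<delta> powr (2 + \<delta>)))
        - \<gamma> \<and>
     (\<forall>\<omega>\<in>E. \<omega> \<in> space M \<and> (1 / real n) * (\<Sum>i=1..n. (u i \<omega>)\<^sup>2) \<le> \<sigma>\<^sup>2 \<and>
        (\<forall>l\<in>{1..L}. \<bar>\<Sum>i=1..n. z l i \<omega> * u i \<omega>\<bar> / sqrt (\<Sum>i=1..n. (z l i \<omega> * u i \<omega>)\<^sup>2)
                     < A * sqrt (2 * ln (real L))))"
proof -
  interpret prob_space M by (rule prob)
  define t where "t = A * sqrt (2 * ln (real L))"
  define d where "d = dnd M n L z u \<delta>"
  define S where "S = (\<lambda>l i \<omega>. z l i \<omega> * u i \<omega>)"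
  define Q where "Q = A0 * (1 + t) powr (1 + \<delta>) * exp (- t\<^sup>2 / 2)"
  have ind: "indep_vars (\<lambda>_. borel) (S l) {1..n}" if "l \<in> {1..L}" for l
    using obs_scores_indep[OF prob indep that] unfolding S_def .
  have meas[measurable]: "S l i \<in> borel_measurable M" if "l \<in> {1..L}" "i \<in> {1..n}" for l i
    using ind[OF that(1)] that(2) unfolding indep_vars_def2 by auto
  have mom: "\<forall>i\<in>{1..n}. integrable M (S l i) \<and> integral\<^sup>L M (S l i) = 0 \<and>
      integrable M (\<lambda>\<omega>. \<bar>S l i \<omega>\<bar> powr (2 + \<delta>)) \<and> 0 < integral\<^sup>L M (\<lambda>\<omega>. \<bar>S l i \<omega>\<bar> powr (2 + \<delta>))"
    and ratio: "0 < moment_ratio M n (S l) \<delta>" if l: "l \<in> {1..L}" for l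
  proof -
    have "\<forall>i\<in>{1..n}. S l i \<in> borel_measurable M \<and> integrable M (S l i) \<and>
        integrable M (\<lambda>\<omega>. \<bar>S l i \<omega>\<bar> powr (2 + \<delta>)) \<and> \<not> (AE \<omega> in M. S l i \<omega> = 0)"
      using meas[OF l] A1 l unfolding S_def by blast
    note pos = moment_ratio_pos[OF n \<delta> this]
    show "0 < moment_ratio M n (S l) \<delta>" by (rule pos(2))
    show "\<forall>i\<in>{1..n}. integrable M (S l i) \<and> integral\<^sup>L M (S l i) = 0 \<and>
      integrable M (\<lambda>\<omega>. \<bar>S l i \<omega>\<bar> powr (2 + \<delta>)) \<and> 0 < integral\<^sup>L M (\<lambda>\<omega>. \<bar>S l i \<omega>\<bar> powr (2 + \<delta>))"
      using A1 l pos(1) unfolding S_def by blast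
  qed
  have d_eq: "d = Min ((\<lambda>l. moment_ratio M n (S l) \<delta>) ` {1..L})"
    unfolding d_def dnd_as_Min S_def ..
  have d_le: "d \<le> moment_ratio M n (S l) \<delta>" if "l \<in> {1..L}" for l
    unfolding d_eq using that by (intro Min_le) auto
  have d: "0 < d" unfolding d_eq using ratio L by (subst Min_gr_iff) auto
  have t: "0 \<le> t" "t \<le> d"
    using threshold_le_moment_ratio[OF A d L L_le[folded d_def]] A L unfolding t_def by auto
  define B where "B l = {\<omega> \<in> space M. t \<le> \<bar>self_normalized n (S l) \<omega>\<bar>}" for l
  define G where "G = {\<omega> \<in> space M. (1 / real n) * (\<Sum>i=1..n. (u i \<omega>)\<^sup>2) \<le> \<sigma>\<^sup>2}"
  have B: "B l \<in> sets M" if "l \<in> {1..L}" for l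
  proof -
    have [measurable]: "self_normalized n (S l) \<in> borel_measurable M"
      using self_normalized_measurable meas that by blast
    show ?thesis unfolding B_def by measurable
  qed
  have tail: "measure M (B l) \<le> 2 * ((1 - Phi t) + Q / d powr (2 + \<delta>))" if "l \<in> {1..L}" for l
    using jsw_two_sided_tail[OF jsw prob n ind[OF that] mom[OF that] t d d_le[OF that] \<delta>]
    unfolding B_def Q_def .
  have G: "G \<in> sets M"
  proof -
    have [measurable]: "(\<lambda>\<omega>. \<Sum>i=1..n. (u i \<omega>)\<^sup>2) \<in> borel_measurable M"
      using obs_u_measurable[OF prob indep] by (intro borel_measurable_sum borel_measurable_power) auto
    show ?thesis unfolding G_def by measurable
  qed
  define E where "E = G - (\<Union>l\<in>{1..L}. B l)"
  have E: "E \<in> sets M" unfolding E_def using G B by blast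
  have PE: "1 - real L * (2 * ((1 - Phi t) + Q / d powr (2 + \<delta>))) - \<gamma> \<le> measure M E"
    using measure_Diff_UNION_ge[where I = "{1..L}" and B = B, OF prob _ G B A2[folded G_def] tail]
    unfolding E_def by simp
  have good: "\<forall>\<omega>\<in>E. \<omega> \<in> space M \<and> (1 / real n) * (\<Sum>i=1..n. (u i \<omega>)\<^sup>2) \<le> \<sigma>\<^sup>2 \<and>
        (\<forall>l\<in>{1..L}. \<bar>\<Sum>i=1..n. z l i \<omega> * u i \<omega>\<bar> / sqrt (\<Sum>i=1..n. (z l i \<omega> * u i \<omega>)\<^sup>2) < t)"
    unfolding E_def G_def B_def self_normalized_def S_def by (auto simp: abs_divide not_le sum_nonneg)
  have alpha: "2 * real L * (1 - Phi t) + 2 * A0 * (1 + t) powr (1 + \<delta>) / (real L powr (A\<^sup>2 - 1) * d powr (2 + \<delta>))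
      = real L * (2 * ((1 - Phi t) + Q / d powr (2 + \<delta>)))"
    unfolding t_def Q_def by (rule alpha_as_union_bound[OF L d])
  show ?thesis unfolding t_def[symmetric] d_def[symmetric] alpha using E PE good by blast
qed

theorem theorem7:
  fixes M :: "'a measure"
    and n K L kend :: nat
    and y u :: "nat \<Rightarrow> 'a \<Rightarrow> real"
    and x z :: "nat \<Rightarrow> nat \<Rightarrow> 'a \<Rightarrow> real"
    and \<beta>s :: "nat \<Rightarrow> real"
    and \<delta> \<sigma>s \<gamma>1 A A0 :: real
  assumes prob: "prob_space M"
    and n_pos: "1 \<le> n" and K_pos: "1 \<le> K" and KL: "K \<le> L" and kend: "kend \<le> K"
    and indep: "prob_space.indep_vars M (\<lambda>_. obs_space K L) (obs K L y x z u) {1..n}"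
    and model: "\<forall>i\<in>{1..n}. \<forall>\<omega>\<in>space M. y i \<omega> = (\<Sum>k=1..K. x k i \<omega> * \<beta>s k) + u i \<omega>"
    and exo: "\<forall>l\<in>{1..K - kend}. \<forall>i\<in>{1..n}. \<forall>\<omega>\<in>space M. z l i \<omega> = x (kend + l) i \<omega>"
    and xpos: "\<forall>\<omega>\<in>space M. \<forall>k\<in>{1..K}. 0 < maxabs n (\<lambda>i. x k i \<omega>)"
    and zpos: "\<forall>\<omega>\<in>space M. \<forall>l\<in>{1..L}. 0 < maxabs n (\<lambda>i. z l i \<omega>)"
    and jsw: "jsw_constant TYPE('a) A0 \<delta>"
    and delta: "0 < \<delta>" "\<delta> \<le> 1"
    and A1: "\<forall>i\<in>{1..n}. \<forall>l\<in>{1..L}.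
               integrable M (\<lambda>\<omega>. \<bar>z l i \<omega> * u i \<omega>\<bar> powr (2 + \<delta>)) \<and>
               integrable M (\<lambda>\<omega>. z l i \<omega> * u i \<omega>) \<and>
               integral\<^sup>L M (\<lambda>\<omega>. z l i \<omega> * u i \<omega>) = 0 \<and>
               \<not> (AE \<omega> in M. z l i \<omega> * u i \<omega> = 0)"
    and A2: "0 < \<sigma>s" "0 < \<gamma>1" "\<gamma>1 < 1"
      "measure M {\<omega> \<in> space M. (1 / real n) * (\<Sum>i=1..n. (u i \<omega>)\<^sup>2) \<le> \<sigma>s\<^sup>2} \<ge> 1 - \<gamma>1"
    and A_ge: "1 \<le> A"
    and L_le: "real L \<le> exp ((dnd M n L z u \<delta>)\<^sup>2 / (2 * A\<^sup>2))"
  shows "\<exists>E\<in>sets M.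
     measure M E \<ge> 1
        - (2 * real L * (1 - Phi (A * sqrt (2 * ln (real L))))
           + 2 * A0 * (1 + A * sqrt (2 * ln (real L))) powr (1 + \<delta>)
             / (real L powr (A\<^sup>2 - 1) * dnd M n L z u \<delta> powr (2 + \<delta>)))
        - \<gamma>1 \<and>
     (\<forall>\<omega>\<in>E. \<forall>\<beta>h. is_solution n K L (\<lambda>i. y i \<omega>) (\<lambda>k i. x k i \<omega>) (\<lambda>l i. z l i \<omega>)
                     (\<sigma>s * (A * sqrt (2 * ln (real L) / real n))) \<beta>h \<longrightarrow>
        (\<forall>p::ereal. 1 \<le> p \<longrightarrow>
           ereal (lpnorm p {1..K} (\<lambda>k. maxabs n (\<lambda>i. x k i \<omega>) * (\<beta>h k - \<beta>s k)))
             \<le> ereal (2 * \<sigma>s * (A * sqrt (2 * ln (real L) / real n)))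
                / kappa n K L (\<lambda>k i. x k i \<omega>) (\<lambda>l i. z l i \<omega>) p (supp K \<beta>s)) \<and>
        (\<forall>k\<in>{1..K}.
           ereal \<bar>\<beta>h k - \<beta>s k\<bar>
             \<le> ereal (2 * \<sigma>s * (A * sqrt (2 * ln (real L) / real n)))
                / (ereal (maxabs n (\<lambda>i. x k i \<omega>))
                   * kappa_star n K L (\<lambda>k i. x k i \<omega>) (\<lambda>l i. z l i \<omega>) k (supp K \<beta>s))))"
proof -
  have L: "1 \<le> L" using K_pos KL by simp
  define t where "t = A * sqrt (2 * ln (real L))"
  obtain E where E: "E \<in> sets M" and PE: "measure M E \<ge> 1
        - (2 * real L * (1 - Phi t) + 2 * A0 * (1 + t) powr (1 + \<delta>)
             / (real L powr (A\<^sup>2 - 1) * dnd M n L z u \<delta> powr (2 + \<delta>))) - \<gamma>1"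
    and good: "\<forall>\<omega>\<in>E. \<omega> \<in> space M \<and> (1 / real n) * (\<Sum>i=1..n. (u i \<omega>)\<^sup>2) \<le> \<sigma>s\<^sup>2 \<and>
        (\<forall>l\<in>{1..L}. \<bar>\<Sum>i=1..n. z l i \<omega> * u i \<omega>\<bar> / sqrt (\<Sum>i=1..n. (z l i \<omega> * u i \<omega>)\<^sup>2) < t)"
    using good_event[OF prob n_pos L indep jsw delta(1) A1 A2(4) A_ge L_le] unfolding t_def by blast
  have thr: "\<sigma>s * (A * sqrt (2 * ln (real L) / real n)) = \<sigma>s * (t / sqrt (real n))"
    unfolding t_def by (simp add: real_sqrt_divide)
  show ?thesis
  proof (rule bexI[OF _ E], rule conjI[OF PE[unfolded t_def]], intro ballI allI impI)
    fix \<omega> \<beta>h assume "\<omega> \<in> E"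
      and sol: "is_solution n K L (\<lambda>i. y i \<omega>) (\<lambda>k i. x k i \<omega>) (\<lambda>l i. z l i \<omega>)
                  (\<sigma>s * (A * sqrt (2 * ln (real L) / real n))) \<beta>h"
    then have \<omega>: "\<omega> \<in> space M" and U: "(1 / real n) * (\<Sum>i=1..n. (u i \<omega>)\<^sup>2) \<le> \<sigma>s\<^sup>2"
      and scores: "\<forall>l\<in>{1..L}. \<bar>\<Sum>i=1..n. z l i \<omega> * u i \<omega>\<bar> / sqrt (\<Sum>i=1..n. (z l i \<omega> * u i \<omega>)\<^sup>2) < t"
      using good by auto
    have t: "0 < t" using self_normalized_lt(1) scores L by fastforce
    have "feasible n K L (\<lambda>i. y i \<omega>) (\<lambda>k i. x k i \<omega>) (\<lambda>l i. z l i \<omega>) (\<sigma>s * (t / sqrt (real n))) \<beta>s"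
      using self_normalized_lt(2) scores model zpos \<omega> t U A2(1)
      by (intro true_coefficient_feasible[OF n_pos]) auto
    from dantzig_error_bound[OF _ this sol[unfolded thr]] xpos \<omega> t A2(1) n_pos
    show "(\<forall>p::ereal. 1 \<le> p \<longrightarrow>
           ereal (lpnorm p {1..K} (\<lambda>k. maxabs n (\<lambda>i. x k i \<omega>) * (\<beta>h k - \<beta>s k)))
             \<le> ereal (2 * \<sigma>s * (A * sqrt (2 * ln (real L) / real n)))
                / kappa n K L (\<lambda>k i. x k i \<omega>) (\<lambda>l i. z l i \<omega>) p (supp K \<beta>s)) \<and>
        (\<forall>k\<in>{1..K}.
           ereal \<bar>\<beta>h k - \<beta>s k\<bar>
             \<le> ereal (2 * \<sigma>s * (A * sqrt (2 * ln (real L) / real n)))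
                / (ereal (maxabs n (\<lambda>i. x k i \<omega>))
                   * kappa_star n K L (\<lambda>k i. x k i \<omega>) (\<lambda>l i. z l i \<omega>) k (supp K \<beta>s)))"
      unfolding mult.assoc[of 2 \<sigma>s] thr by simp
  qed
qed

end
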